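(* Let $(M,\cdot,1)$ be a monoid, $\Sigma$ a finite alphabet, and $A=(Q,\Sigma,u,i_u,\delta,w,\rho)$ an $M$-DFA. If $A$ is minimal then: 1. $A$ is accessible; 2. for all $p,q\in Q$: if there exists $m\in M$ with $m\cdot\mathcal{A}_p=\mathcal{A}_q$ or $\mathcal{A}_p=m\cdot\mathcal{A}_q$, then $p=q$; 3. for all $p,q\in Q$: if $\mathcal{A}_p=\mathcal{A}_q$ then $p=q$.
   Context: An $M$-DFA is $A=(Q,\Sigma,u,i_u,\delta,w,\rho)$ with $Q$ finite nonempty, initial state $u$, initial value $i_u\in M$, $\delta:Q\times\Sigma\to Q$, $w:Q\times\Sigma\to M$, $\rho:Q\to M$. Write $q\alpha$ for the extension of $\delta$ to words ($q\varepsilon=q$, $q(\alpha\sigma)=\delta(q\alpha,\sigma)$) and $w^*(q,\varepsilon)=1$, $w^*(q,\alpha\sigma)=w^*(q,\alpha)\cdot w(q\alpha,\sigma)$. $A$ recognizes $\mathcal{A}(\alpha)=i_u\cdot w^*(u,\alpha)\cdot\rho(u\alpha)$, and for $q\in Q$, $\mathcal{A}_q(\alpha)=w^*(q,\alpha)\cdot\rho(q\alpha)$. For $m\in M$, $(m\cdot\ell)(\gamma)=m\cdot\ell(\gamma)$. Two $M$-DFAs are equivalent if they recognize the same $M$-language; $A$ is minimal if no equivalent $M$-DFA has fewer states; $A$ is accessible if $Q=\{u\alpha\mid\alpha\in\Sigma^*\}$. *)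

theory Defs
  imports Main
begin

text \<open>An M-DFA over the finite alphabet given by the finite type 'a, with state
  set Q (a finite nonempty subset of the type 'q) and weights in the monoid 'm.\<close>

record ('q, 'a, 'm) mdfa =
  states :: "'q set"
  init   :: "'q"
  ival   :: "'m"
  trans  :: "'q \<Rightarrow> 'a \<Rightarrow> 'q"
  wt     :: "'q \<Rightarrow> 'a \<Rightarrow> 'm"
  fin    :: "'q \<Rightarrow> 'm"

definition wf_mdfa :: "('q, 'a, 'm) mdfa \<Rightarrow> bool" where
  "wf_mdfa A \<longleftrightarrow> finite (states A) \<and> states A \<noteq> {} \<and> init A \<in> states A \<and>
     (\<forall>q\<in>states A. \<forall>\<sigma>. trans A q \<sigma> \<in> states A)"

definition dstar :: "('q, 'a, 'm) mdfa \<Rightarrow> 'q \<Rightarrow> 'a list \<Rightarrow> 'q" where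
  "dstar A q \<alpha> = foldl (trans A) q \<alpha>"

text \<open>w^*, defined on the reversed word so that the recursion is literally
  w^*(q, epsilon) = 1 and w^*(q, alpha sigma) = w^*(q, alpha) * w(q alpha, sigma).\<close>
fun wstar_rev :: "('q, 'a, 'm::monoid_mult) mdfa \<Rightarrow> 'q \<Rightarrow> 'a list \<Rightarrow> 'm" where
  "wstar_rev A q [] = 1"
| "wstar_rev A q (\<sigma> # \<beta>) = wstar_rev A q \<beta> * wt A (dstar A q (rev \<beta>)) \<sigma>"

definition wstar :: "('q, 'a, 'm::monoid_mult) mdfa \<Rightarrow> 'q \<Rightarrow> 'a list \<Rightarrow> 'm" where
  "wstar A q \<alpha> = wstar_rev A q (rev \<alpha>)"

definition lang :: "('q, 'a, 'm::monoid_mult) mdfa \<Rightarrow> 'a list \<Rightarrow> 'm" where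
  "lang A \<alpha> = ival A * wstar A (init A) \<alpha> * fin A (dstar A (init A) \<alpha>)"

definition state_lang :: "('q, 'a, 'm::monoid_mult) mdfa \<Rightarrow> 'q \<Rightarrow> 'a list \<Rightarrow> 'm" where
  "state_lang A q \<alpha> = wstar A q \<alpha> * fin A (dstar A q \<alpha>)"

definition lscale :: "'m::monoid_mult \<Rightarrow> ('a list \<Rightarrow> 'm) \<Rightarrow> 'a list \<Rightarrow> 'm" where
  "lscale m l \<gamma> = m * l \<gamma>"

definition equivalent :: "('q, 'a, 'm::monoid_mult) mdfa \<Rightarrow> ('r, 'a, 'm) mdfa \<Rightarrow> bool" where
  "equivalent A B \<longleftrightarrow> lang A = lang B"

text \<open>Competitors range over
  M-DFAs whose states live in the same type 'q; this loses nothing, since any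
  M-DFA with fewer than card Q states can be renamed injectively into 'q.\<close>
definition minimal :: "('q, 'a, 'm::monoid_mult) mdfa \<Rightarrow> bool" where
  "minimal A \<longleftrightarrow> wf_mdfa A \<and>
     \<not> (\<exists>B :: ('q, 'a, 'm) mdfa. wf_mdfa B \<and> equivalent B A \<and> card (states B) < card (states A))"

definition accessible :: "('q, 'a, 'm) mdfa \<Rightarrow> bool" where
  "accessible A \<longleftrightarrow> states A = {dstar A (init A) \<alpha> | \<alpha>. True}"

end

theory Submission
  imports Defs
begin

text \<open>A minimal M-DFA cannot be shrunk, so it suffices to shrink every M-DFA that violates one
  of the three properties. Unreachable states can simply be deleted. If \<open>A\<^sub>q = m \<cdot> A\<^sub>p\<close>
  with \<open>p \<noteq> q\<close>, then entering \<open>q\<close> with accumulated weight \<open>x\<close> contributes the same as entering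
  \<open>p\<close> with weight \<open>x \<cdot> m\<close>; so redirecting every transition into \<open>q\<close> (and the initial state) to
  \<open>p\<close>, multiplying its weight on the right by \<open>m\<close>, preserves the language and removes \<open>q\<close>.
  The third property is the second with \<open>m = 1\<close>.\<close>

lemma dstar_Nil [simp]: "dstar A q [] = q"
  by (simp add: dstar_def)

lemma dstar_Cons [simp]: "dstar A q (\<sigma> # \<alpha>) = dstar A (trans A q \<sigma>) \<alpha>"
  by (simp add: dstar_def)

lemma dstar_append: "dstar A q (\<alpha> @ \<beta>) = dstar A (dstar A q \<alpha>) \<beta>"
  by (simp add: dstar_def)

lemma dstar_in_states:
  assumes "wf_mdfa A" and "q \<in> states A"
  shows "dstar A q \<alpha> \<in> states A"
  using assms by (induction \<alpha> arbitrary: q) (auto simp: wf_mdfa_def)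

lemma wstar_Nil [simp]: "wstar A q [] = 1"
  by (simp add: wstar_def)

lemma wstar_snoc: "wstar A q (\<alpha> @ [\<sigma>]) = wstar A q \<alpha> * wt A (dstar A q \<alpha>) \<sigma>"
  by (simp add: wstar_def)

lemma wstar_append: "wstar A q (\<alpha> @ \<beta>) = wstar A q \<alpha> * wstar A (dstar A q \<alpha>) \<beta>"
proof (induction \<beta> rule: rev_induct)
  case Nil
  then show ?case by simp
next
  case (snoc \<sigma> \<beta>)
  then show ?case
    by (simp add: wstar_snoc dstar_append mult.assoc flip: append_assoc)
qed

lemma wstar_Cons: "wstar A q (\<sigma> # \<alpha>) = wt A q \<sigma> * wstar A (trans A q \<sigma>) \<alpha>"
  using wstar_append [of A q "[\<sigma>]" \<alpha>] wstar_snoc [of A q "[]" \<sigma>] by simp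

lemma state_lang_Nil [simp]: "state_lang A q [] = fin A q"
  by (simp add: state_lang_def)

lemma state_lang_Cons [simp]:
  "state_lang A q (\<sigma> # \<alpha>) = wt A q \<sigma> * state_lang A (trans A q \<sigma>) \<alpha>"
  by (simp add: state_lang_def wstar_Cons mult.assoc)

lemma lang_eq_ival_state_lang: "lang A \<alpha> = ival A * state_lang A (init A) \<alpha>"
  by (simp add: lang_def state_lang_def mult.assoc)

lemma lscale_1 [simp]: "lscale 1 l = l"
  by (simp add: lscale_def fun_eq_iff)

lemma minimal_card_le:
  fixes A B :: "('q, 'a, 'm::monoid_mult) mdfa"
  assumes "minimal A" and "wf_mdfa B" and "lang B = lang A"
  shows "card (states A) \<le> card (states B)"
  using assms unfolding minimal_def equivalent_def by (metis not_le)

lemma minimal_wf_mdfa: "minimal A \<Longrightarrow> wf_mdfa A"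
  by (simp add: minimal_def)

definition reachable :: "('q, 'a, 'm) mdfa \<Rightarrow> 'q set" where
  "reachable A = range (dstar A (init A))"

lemma accessible_iff_reachable: "accessible A \<longleftrightarrow> states A = reachable A"
  by (auto simp: accessible_def reachable_def)

lemma reachable_subset_states:
  assumes "wf_mdfa A"
  shows "reachable A \<subseteq> states A"
  using assms dstar_in_states [OF assms] by (auto simp: reachable_def wf_mdfa_def)

lemma trans_in_reachable: "q \<in> reachable A \<Longrightarrow> trans A q \<sigma> \<in> reachable A"
  by (auto simp: reachable_def dstar_append intro: range_eqI [of _ _ "_ @ [\<sigma>]"])

lemma wf_mdfa_restrict_reachable:
  assumes "wf_mdfa A"
  shows "wf_mdfa (A\<lparr>states := reachable A\<rparr>)"
proof -
  have "init A \<in> reachable A"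
    unfolding reachable_def using dstar_Nil by (metis rangeI)
  moreover have "finite (reachable A)"
    using finite_subset [OF reachable_subset_states [OF assms]] assms by (simp add: wf_mdfa_def)
  ultimately show ?thesis
    by (auto simp: wf_mdfa_def trans_in_reachable)
qed

lemma lang_states_update [simp]: "lang (A\<lparr>states := S\<rparr>) = lang A"
proof -
  have "wstar_rev (A\<lparr>states := S\<rparr>) q \<alpha> = wstar_rev A q \<alpha>" for q \<alpha>
    by (induction \<alpha>) (simp_all add: dstar_def)
  then show ?thesis
    by (simp add: fun_eq_iff lang_def wstar_def dstar_def)
qed

lemma minimal_accessible:
  assumes "minimal A"
  shows "accessible A"
proof -
  have wf: "wf_mdfa A"
    using assms by (rule minimal_wf_mdfa)
  have "card (states A) \<le> card (reachable A)"
    using minimal_card_le [OF assms wf_mdfa_restrict_reachable [OF wf]] by simp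
  moreover have "finite (states A)"
    using wf by (simp add: wf_mdfa_def)
  ultimately show ?thesis
    unfolding accessible_iff_reachable
    using card_seteq [OF _ reachable_subset_states [OF wf]] by blast
qed

definition merge_state :: "('q, 'a, 'm::monoid_mult) mdfa \<Rightarrow> 'q \<Rightarrow> 'q \<Rightarrow> 'm \<Rightarrow> ('q, 'a, 'm) mdfa" where
  "merge_state A q p m =
     \<lparr>states = states A - {q},
      init = (if init A = q then p else init A),
      ival = (if init A = q then ival A * m else ival A),
      trans = (\<lambda>r \<sigma>. if trans A r \<sigma> = q then p else trans A r \<sigma>),
      wt = (\<lambda>r \<sigma>. if trans A r \<sigma> = q then wt A r \<sigma> * m else wt A r \<sigma>),
      fin = fin A\<rparr>"

lemma wf_mdfa_merge_state:
  assumes "wf_mdfa A" and "p \<in> states A" and "p \<noteq> q"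
  shows "wf_mdfa (merge_state A q p m)"
  using assms by (auto simp: wf_mdfa_def merge_state_def)

lemma state_lang_merge_state:
  assumes "state_lang A q = lscale m (state_lang A p)"
  shows "state_lang (merge_state A q p m) r = state_lang A r"
proof
  fix \<alpha>
  have q_lang: "state_lang A q \<beta> = m * state_lang A p \<beta>" for \<beta>
    using assms by (simp add: lscale_def fun_eq_iff)
  show "state_lang (merge_state A q p m) r \<alpha> = state_lang A r \<alpha>"
    by (induction \<alpha> arbitrary: r) (simp_all add: merge_state_def q_lang mult.assoc)
qed

lemma lang_merge_state:
  assumes "state_lang A q = lscale m (state_lang A p)"
  shows "lang (merge_state A q p m) = lang A"
proof
  fix \<alpha>
  have "state_lang A q \<alpha> = m * state_lang A p \<alpha>"
    using assms by (simp add: lscale_def)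
  then show "lang (merge_state A q p m) \<alpha> = lang A \<alpha>"
    unfolding lang_eq_ival_state_lang state_lang_merge_state [OF assms]
    by (simp add: merge_state_def mult.assoc)
qed

lemma minimal_scaled_state_lang_eq:
  assumes "minimal A" and "p \<in> states A" and "q \<in> states A"
    and "lscale m (state_lang A p) = state_lang A q"
  shows "p = q"
proof (rule ccontr)
  assume "p \<noteq> q"
  have wf: "wf_mdfa A"
    using assms(1) by (rule minimal_wf_mdfa)
  have "card (states A) \<le> card (states A - {q})"
    using minimal_card_le [OF assms(1) wf_mdfa_merge_state [OF wf assms(2) \<open>p \<noteq> q\<close>]
        lang_merge_state [OF assms(4) [symmetric]]]
    by (simp add: merge_state_def)
  moreover have "card (states A - {q}) < card (states A)"
    using wf assms(3) unfolding wf_mdfa_def by (blast intro: card_Diff1_less)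
  ultimately show False
    by simp
qed

theorem mainTheorem8:
  fixes A :: "('q, 'a::finite, 'm::monoid_mult) mdfa"
  assumes "minimal A"
  shows "accessible A \<and>
    (\<forall>p\<in>states A. \<forall>q\<in>states A.
       (\<exists>m. lscale m (state_lang A p) = state_lang A q \<or> state_lang A p = lscale m (state_lang A q))
       \<longrightarrow> p = q) \<and>
    (\<forall>p\<in>states A. \<forall>q\<in>states A. state_lang A p = state_lang A q \<longrightarrow> p = q)"
  using minimal_accessible [OF assms]
    minimal_scaled_state_lang_eq [OF assms]
    minimal_scaled_state_lang_eq [OF assms, where m = 1]
  by (metis lscale_1)

end
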